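(* Let $K$ be a field of characteristic $0$, let $L=\mathcal{L}(x,y)$ be the free Lie algebra over $K$ freely generated by $x,y$, let $\delta$ be the derivation of $L$ with $\delta(x)=0$, $\delta(y)=x$, and $L^\delta=\ker\delta$. If $f\in L^\delta$ has degree $6$, then $f$ belongs to the Lie subalgebra of $L$ generated by $x$, $[y,x]$ and $[y,x,y,[y,x,x]]$.
   Context: Brackets are left-normed: $[a_1,a_2,\ldots,a_n]=[[\ldots[a_1,a_2],\ldots],a_n]$; thus $[y,x,y,[y,x,x]]=[[[y,x],y],[[y,x],x]]$. *)

theory Defs
  imports Main
begin

text \<open>Free associative algebra K<x,y> realised as coefficient functions on words
  over the alphabet {x,y}; the free Lie algebra L(x,y) is realised (standard
  identification) as the Lie subalgebra of K<x,y> generated by x and y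
  (the Lie polynomials), with bracket [p,q] = pq - qp.\<close>

datatype gen = Gx | Gy

type_synonym 'a npoly = "gen list \<Rightarrow> 'a"

definition nmult :: "'a::comm_ring_1 npoly \<Rightarrow> 'a npoly \<Rightarrow> 'a npoly" where
  "nmult p q = (\<lambda>w. \<Sum>i\<le>length w. p (take i w) * q (drop i w))"

definition nadd :: "'a::comm_ring_1 npoly \<Rightarrow> 'a npoly \<Rightarrow> 'a npoly" where
  "nadd p q = (\<lambda>w. p w + q w)"

definition nscale :: "'a::comm_ring_1 \<Rightarrow> 'a npoly \<Rightarrow> 'a npoly" where
  "nscale c p = (\<lambda>w. c * p w)"

definition brk :: "'a::comm_ring_1 npoly \<Rightarrow> 'a npoly \<Rightarrow> 'a npoly" where
  "brk p q = (\<lambda>w. nmult p q w - nmult q p w)"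

definition genX :: "'a::comm_ring_1 npoly" where
  "genX = (\<lambda>w. if w = [Gx] then 1 else 0)"

definition genY :: "'a::comm_ring_1 npoly" where
  "genY = (\<lambda>w. if w = [Gy] then 1 else 0)"

inductive_set lie_gen :: "'a::comm_ring_1 npoly set \<Rightarrow> 'a npoly set" for S where
  gen: "p \<in> S \<Longrightarrow> p \<in> lie_gen S"
| add: "p \<in> lie_gen S \<Longrightarrow> q \<in> lie_gen S \<Longrightarrow> nadd p q \<in> lie_gen S"
| scale: "p \<in> lie_gen S \<Longrightarrow> nscale c p \<in> lie_gen S"
| bracket: "p \<in> lie_gen S \<Longrightarrow> q \<in> lie_gen S \<Longrightarrow> brk p q \<in> lie_gen S"

definition free_lie :: "'a::comm_ring_1 npoly set" where
  "free_lie = lie_gen {genX, genY}"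

text \<open>The derivation delta with delta(x) = 0, delta(y) = x, extended to K<x,y>
  as a derivation: delta of a word is the sum of words obtained by replacing one
  occurrence of y by x.
  It restricts to the unique Lie derivation of L(x,y) with these values.\<close>
definition lie_delta :: "'a::comm_ring_1 npoly \<Rightarrow> 'a npoly" where
  "lie_delta p = (\<lambda>w. \<Sum>i\<in>{i. i < length w \<and> w ! i = Gx}. p (w[i := Gy]))"

definition homogeneous :: "nat \<Rightarrow> 'a::comm_ring_1 npoly \<Rightarrow> bool" where
  "homogeneous d p \<longleftrightarrow> (\<forall>w. p w \<noteq> 0 \<longrightarrow> length w = d)"

end

theory Submission
  imports Defs
begin

text \<open>Jacobi's identity shows that brackets of left-normed brackets \<open>[a\<^sub>1, \<dots>, a\<^sub>n]\<close> are
  again linear combinations of such, so every homogeneous Lie polynomial of degree \<open>n\<close> lies in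
  their span; by antisymmetry, in degree 6 the 16 brackets \<open>[y, x, w]\<close> with \<open>|w| = 4\<close> suffice.
  For \<open>f\<close> in the kernel of \<open>\<delta>\<close>, the coefficients of \<open>\<delta>(f)\<close> at six words give linear
  relations among the 16 coefficients, solvable because the characteristic is 0; comparing
  coefficients on all 64 words of length 6 then shows that \<open>f\<close> is a combination of
  \<open>[y, x, x, x, x, x]\<close>, \<open>[[y, x, x, x], [y, x]]\<close> and \<open>[y, x, y, [y, x, x]]\<close>.\<close>

section \<open>The bracket of non-commutative polynomials\<close>

lemma nmult_Nil: "nmult p q [] = p [] * q []"
  by (simp add: nmult_def)

lemma nmult_Cons: "nmult p q (a # w) = p [] * q (a # w) + nmult (\<lambda>u. p (a # u)) q w"
  unfolding nmult_def by (simp del: sum.atMost_Suc add: sum.atMost_Suc_shift)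

lemma nmult_add_left: "nmult (\<lambda>w. p w + p' w) q = (\<lambda>w. nmult p q w + nmult p' q w)"
  by (rule ext) (simp add: nmult_def algebra_simps sum.distrib)

lemma nmult_add_right: "nmult p (\<lambda>w. q w + q' w) = (\<lambda>w. nmult p q w + nmult p q' w)"
  by (rule ext) (simp add: nmult_def algebra_simps sum.distrib)

lemma nmult_diff_left: "nmult (\<lambda>w. p w - p' w) q = (\<lambda>w. nmult p q w - nmult p' q w)"
  by (rule ext) (simp add: nmult_def algebra_simps sum_subtractf)

lemma nmult_diff_right: "nmult p (\<lambda>w. q w - q' w) = (\<lambda>w. nmult p q w - nmult p q' w)"
  by (rule ext) (simp add: nmult_def algebra_simps sum_subtractf)

lemma nmult_scale_left: "nmult (\<lambda>w. c * p w) q = (\<lambda>w. c * nmult p q w)"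
  by (rule ext) (simp add: nmult_def algebra_simps sum_distrib_left)

lemma nmult_scale_right: "nmult p (\<lambda>w. c * q w) = (\<lambda>w. c * nmult p q w)"
  by (rule ext) (simp add: nmult_def algebra_simps sum_distrib_left)

lemma nmult_zero_left: "nmult (\<lambda>_. 0) q = (\<lambda>_. 0)"
  by (simp add: nmult_def)

lemma nmult_zero_right: "nmult p (\<lambda>_. 0) = (\<lambda>_. 0)"
  by (simp add: nmult_def)

lemma nmult_assoc: "nmult (nmult p q) r = nmult p (nmult q r)"
proof
  show "nmult (nmult p q) r w = nmult p (nmult q r) w" for w
  proof (induction w arbitrary: p q r)
    case Nil
    then show ?case by (simp add: nmult_Nil)
  next
    case (Cons a w)
    have shift: "(\<lambda>u. nmult p q (a # u)) = (\<lambda>u. p [] * q (a # u) + nmult (\<lambda>u. p (a # u)) q u)"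
      by (simp add: nmult_Cons)
    have "nmult (nmult p q) r (a # w) = p [] * q [] * r (a # w) + nmult (\<lambda>u. nmult p q (a # u)) r w"
      by (simp add: nmult_Cons nmult_Nil)
    also have "\<dots> = p [] * q [] * r (a # w) + p [] * nmult (\<lambda>u. q (a # u)) r w
        + nmult (nmult (\<lambda>u. p (a # u)) q) r w"
      unfolding shift by (simp add: nmult_add_left nmult_scale_left algebra_simps)
    also have "\<dots> = nmult p (nmult q r) (a # w)"
      using Cons.IH by (simp add: nmult_Cons nmult_Nil algebra_simps)
    finally show ?case .
  qed
qed

lemma brk_jacobi: "brk p (brk q r) = nadd (brk (brk p q) r) (nscale (-1) (brk (brk p r) q))"
  unfolding brk_def nadd_def nscale_def
  by (rule ext) (simp add: nmult_diff_left nmult_diff_right nmult_assoc algebra_simps)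

lemma brk_zero_left: "brk (\<lambda>_. 0) q = (\<lambda>_. 0)"
  by (simp add: brk_def nmult_zero_left nmult_zero_right)

lemma brk_zero_right: "brk p (\<lambda>_. 0) = (\<lambda>_. 0)"
  by (simp add: brk_def nmult_zero_left nmult_zero_right)

lemma brk_add_left: "brk (nadd p p') q = nadd (brk p q) (brk p' q)"
  by (rule ext) (simp add: brk_def nadd_def nmult_add_left nmult_add_right)

lemma brk_add_right: "brk p (nadd q q') = nadd (brk p q) (brk p q')"
  by (rule ext) (simp add: brk_def nadd_def nmult_add_left nmult_add_right)

lemma brk_scale_left: "brk (nscale c p) q = nscale c (brk p q)"
  by (rule ext) (simp add: brk_def nscale_def nmult_scale_left nmult_scale_right algebra_simps)

lemma brk_scale_right: "brk p (nscale c q) = nscale c (brk p q)"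
  by (rule ext) (simp add: brk_def nscale_def nmult_scale_left nmult_scale_right algebra_simps)

lemma brk_self: "brk p p = (\<lambda>_. 0)"
  by (simp add: brk_def)

lemma brk_commute: "brk q p = nscale (-1) (brk p q)"
  by (rule ext) (simp add: brk_def nscale_def)

section \<open>Left-normed brackets\<close>

definition gen_poly :: "gen \<Rightarrow> 'a::comm_ring_1 npoly" where
  "gen_poly a = (\<lambda>w. if w = [a] then 1 else 0)"

lemma gen_poly_simps: "gen_poly Gx = genX" "gen_poly Gy = genY"
  by (simp_all add: gen_poly_def genX_def genY_def)

definition brk_gen :: "'a::comm_ring_1 npoly \<Rightarrow> gen \<Rightarrow> 'a npoly" where
  "brk_gen p b = brk p (gen_poly b)"

fun left_normed :: "gen list \<Rightarrow> 'a::comm_ring_1 npoly" where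
  "left_normed [] = (\<lambda>_. 0)"
| "left_normed (a # w) = foldl brk_gen (gen_poly a) w"

lemma left_normed_snoc: "u \<noteq> [] \<Longrightarrow> left_normed (u @ [b]) = brk (left_normed u) (gen_poly b)"
  by (cases u) (simp_all add: brk_gen_def)

lemma foldl_brk_gen_zero: "foldl brk_gen (\<lambda>_. 0) w = (\<lambda>_. 0)"
  by (induction w) (simp_all add: brk_gen_def brk_zero_left)

lemma foldl_brk_gen_scale: "foldl brk_gen (nscale c p) w = nscale c (foldl brk_gen p w)"
  by (induction w arbitrary: p) (simp_all add: brk_gen_def brk_scale_left)

lemma left_normed_same: "left_normed (a # a # w) = (\<lambda>_. 0)"
  by (simp add: brk_gen_def brk_self foldl_brk_gen_zero)

lemma left_normed_swap:
  "left_normed (a # b # w) = nscale (-1) (left_normed (b # a # w) :: 'a::comm_ring_1 npoly)"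
proof -
  have "brk (gen_poly a) (gen_poly b) = nscale (-1) (brk (gen_poly b) (gen_poly a) :: 'a npoly)"
    by (rule brk_commute)
  then show ?thesis by (simp add: brk_gen_def foldl_brk_gen_scale)
qed

inductive_set left_normed_span :: "nat \<Rightarrow> 'a::comm_ring_1 npoly set" for n where
  zero: "(\<lambda>_. 0) \<in> left_normed_span n"
| left_normed: "length w = n \<Longrightarrow> left_normed w \<in> left_normed_span n"
| add: "p \<in> left_normed_span n \<Longrightarrow> q \<in> left_normed_span n \<Longrightarrow> nadd p q \<in> left_normed_span n"
| scale: "p \<in> left_normed_span n \<Longrightarrow> nscale c p \<in> left_normed_span n"

lemma left_normed_span_brk_gen_poly:
  "p \<in> left_normed_span n \<Longrightarrow> brk p (gen_poly b) \<in> left_normed_span (Suc n)"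
proof (induction rule: left_normed_span.induct)
  case (left_normed w)
  show ?case
  proof (cases "w = []")
    case False
    then show ?thesis
      using left_normed left_normed_span.left_normed[of "w @ [b]"] by (simp add: left_normed_snoc)
  qed (simp add: brk_zero_left left_normed_span.zero)
qed (simp_all add: brk_zero_left brk_add_left brk_scale_left left_normed_span.intros)

text \<open>Induction on the right word, expanding its last letter with the Jacobi identity.\<close>

lemma brk_left_normed_in_span:
  fixes u w :: "gen list"
  assumes "u \<noteq> []"
  shows "brk (left_normed u) (left_normed w :: 'a::comm_ring_1 npoly)
    \<in> left_normed_span (length u + length w)"
  using assms
proof (induction w arbitrary: u rule: rev_induct)
  case Nil
  then show ?case by (simp add: brk_zero_right left_normed_span.zero)
next
  case (snoc b w)
  show ?case
  proof (cases "w = []")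
    case True
    then show ?thesis
      using snoc.prems left_normed_span.left_normed[of "u @ [b]"] by (simp add: left_normed_snoc)
  next
    case False
    let ?L = "left_normed :: gen list \<Rightarrow> 'a npoly"
    have "brk (brk (?L u) (?L w)) (gen_poly b) \<in> left_normed_span (length u + length (w @ [b]))"
      using left_normed_span_brk_gen_poly[OF snoc.IH[OF snoc.prems]] by simp
    moreover have "brk (brk (?L u) (gen_poly b)) (?L w) \<in> left_normed_span (length u + length (w @ [b]))"
      using snoc.IH[of "u @ [b]"] snoc.prems by (simp add: left_normed_snoc)
    ultimately show ?thesis
      using False by (simp add: left_normed_snoc brk_jacobi left_normed_span.add left_normed_span.scale)
  qed
qed

lemma left_normed_span_brk_left_normed:
  "p \<in> left_normed_span m \<Longrightarrow> brk p (left_normed w) \<in> left_normed_span (m + length w)"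
proof (induction rule: left_normed_span.induct)
  case (left_normed u)
  show ?case
  proof (cases "u = []")
    case False
    then show ?thesis using left_normed brk_left_normed_in_span by blast
  qed (simp add: brk_zero_left left_normed_span.zero)
qed (simp_all add: brk_zero_left brk_add_left brk_scale_left left_normed_span.intros)

lemma left_normed_span_brk:
  "q \<in> left_normed_span n \<Longrightarrow> p \<in> left_normed_span m \<Longrightarrow> brk p q \<in> left_normed_span (m + n)"
proof (induction rule: left_normed_span.induct)
  case (left_normed w)
  then show ?case using left_normed_span_brk_left_normed by blast
qed (simp_all add: brk_zero_right brk_add_right brk_scale_right left_normed_span.intros)

lemma left_normed_span_sum:
  "(\<And>i. i \<le> (k::nat) \<Longrightarrow> g i \<in> left_normed_span n) \<Longrightarrow> (\<lambda>w. \<Sum>i\<le>k. g i w) \<in> left_normed_span n"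
proof (induction k)
  case 0
  then show ?case by simp
next
  case (Suc k)
  have "(\<lambda>w. \<Sum>i\<le>Suc k. g i w) = nadd (\<lambda>w. \<Sum>i\<le>k. g i w) (g (Suc k))"
    by (simp add: nadd_def)
  then show ?case using Suc by (simp add: left_normed_span.add)
qed

definition hom_part :: "nat \<Rightarrow> 'a::comm_ring_1 npoly \<Rightarrow> 'a npoly" where
  "hom_part n p = (\<lambda>w. if length w = n then p w else 0)"

lemma hom_part_eq_self: "homogeneous n p \<Longrightarrow> hom_part n p = p"
  unfolding homogeneous_def hom_part_def by (rule ext) auto

lemma nmult_hom_part:
  "nmult (hom_part i p) (hom_part j q) w =
     (if length w = i + j then p (take i w) * q (drop i w) else 0)"
proof -
  have "nmult (hom_part i p) (hom_part j q) w = (\<Sum>k\<le>length w. if k = i then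
      (if length w = i + j then p (take i w) * q (drop i w) else 0) else 0)"
    unfolding nmult_def hom_part_def by (rule sum.cong) (auto simp: min_def)
  then show ?thesis by (auto simp: sum.delta)
qed

lemma hom_part_nmult:
  "hom_part n (nmult p q) w = (\<Sum>i\<le>n. nmult (hom_part i p) (hom_part (n - i) q) w)"
  unfolding nmult_hom_part by (cases "length w = n") (simp_all add: hom_part_def nmult_def)

lemma hom_part_brk:
  "hom_part n (brk p q) = (\<lambda>w. \<Sum>i\<le>n. brk (hom_part i p) (hom_part (n - i) q) w)"
proof
  fix w
  have "hom_part n (brk p q) w = hom_part n (nmult p q) w - hom_part n (nmult q p) w"
    by (simp add: hom_part_def brk_def)
  moreover have "(\<Sum>i\<le>n. nmult (hom_part i q) (hom_part (n - i) p) w)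
      = (\<Sum>i\<le>n. nmult (hom_part (n - i) q) (hom_part i p) w)"
    using sum.atLeastAtMost_rev[of "\<lambda>i. nmult (hom_part i q) (hom_part (n - i) p) w" 0 n]
    by (simp add: atLeast0AtMost)
  ultimately show "hom_part n (brk p q) w = (\<Sum>i\<le>n. brk (hom_part i p) (hom_part (n - i) q) w)"
    by (simp only: hom_part_nmult brk_def sum_subtractf)
qed

lemma hom_part_lie_gen_in_span: "p \<in> lie_gen {genX, genY} \<Longrightarrow> hom_part n p \<in> left_normed_span n"
proof (induction arbitrary: n rule: lie_gen.induct)
  case (gen p)
  then obtain a where a: "p = gen_poly a"
    by (metis gen_poly_simps insert_iff singletonD)
  show ?case
  proof (cases "n = 1")
    case True
    then have "hom_part n p = left_normed [a]" using a by (auto simp: hom_part_def gen_poly_def)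
    then show ?thesis using True left_normed_span.left_normed[of "[a]"] by simp
  next
    case False
    then have "hom_part n p = (\<lambda>_. 0)" using a by (auto simp: hom_part_def gen_poly_def)
    then show ?thesis by (simp add: left_normed_span.zero)
  qed
next
  case (add p q)
  have "hom_part n (nadd p q) = nadd (hom_part n p) (hom_part n q)"
    by (auto simp: hom_part_def nadd_def)
  then show ?case using add by (simp add: left_normed_span.add)
next
  case (scale p c)
  have "hom_part n (nscale c p) = nscale c (hom_part n p)"
    by (auto simp: hom_part_def nscale_def)
  then show ?case using scale by (simp add: left_normed_span.scale)
next
  case (bracket p q)
  show ?case unfolding hom_part_brk
  proof (rule left_normed_span_sum)
    fix i assume "i \<le> n"
    then show "brk (hom_part i p) (hom_part (n - i) q) \<in> left_normed_span n"
      using bracket.IH left_normed_span_brk[of "hom_part (n - i) q" "n - i" "hom_part i p" i] by simp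
  qed
qed

lemma free_lie_homogeneous_in_left_normed_span:
  "p \<in> free_lie \<Longrightarrow> homogeneous n p \<Longrightarrow> p \<in> left_normed_span n"
  using hom_part_lie_gen_in_span[of p n] hom_part_eq_self[of n p] by (simp add: free_lie_def)

lemma words_length_eq_set_n_lists: "{w. length w = n} = set (List.n_lists n [Gx, Gy])"
proof -
  have "set [Gx, Gy] = UNIV" using gen.exhaust by auto
  then show ?thesis by (simp add: set_n_lists)
qed

lemma finite_words_length: "finite {w :: gen list. length w = n}"
  unfolding words_length_eq_set_n_lists by simp

definition yx_combination :: "nat \<Rightarrow> (gen list \<Rightarrow> 'a) \<Rightarrow> 'a::comm_ring_1 npoly" where
  "yx_combination n c = (\<lambda>v. \<Sum>w | length w = n. c w * left_normed (Gy # Gx # w) v)"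

lemma yx_combination_single:
  assumes "length r = n"
  shows "yx_combination n (\<lambda>w. if w = r then k else 0) = nscale k (left_normed (Gy # Gx # r))"
proof
  fix v
  have "yx_combination n (\<lambda>w. if w = r then k else 0) v
      = (\<Sum>w | length w = n. if w = r then k * left_normed (Gy # Gx # r) v else 0)"
    unfolding yx_combination_def by (rule sum.cong) auto
  then show "yx_combination n (\<lambda>w. if w = r then k else 0) v = nscale k (left_normed (Gy # Gx # r)) v"
    using assms finite_words_length by (simp add: nscale_def)
qed

text \<open>By antisymmetry, a left-normed bracket of degree \<open>\<ge> 2\<close> is \<open>0\<close> or \<open>\<pm>[y, x, w]\<close>.\<close>

lemma left_normed_span_Suc_Suc_yx_combination:
  "p \<in> left_normed_span (Suc (Suc n)) \<Longrightarrow> \<exists>c. p = yx_combination n c"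
proof (induction rule: left_normed_span.induct)
  case zero
  show ?case by (rule exI[of _ "\<lambda>_. 0"]) (simp add: yx_combination_def)
next
  case (left_normed w)
  then obtain a b r where w: "w = a # b # r" and r: "length r = n"
    by (cases w; cases "tl w") auto
  consider "a = b" | "a = Gx" "b = Gy" | "a = Gy" "b = Gx"
    by (metis gen.exhaust)
  then show ?case
  proof cases
    case 1
    then show ?thesis using w
      by (intro exI[of _ "\<lambda>_. 0"]) (simp add: yx_combination_def left_normed_same del: left_normed.simps)
  next
    case 2
    then show ?thesis using w r left_normed_swap[of Gx Gy r]
      by (intro exI[of _ "\<lambda>w. if w = r then -1 else 0"]) (simp add: yx_combination_single del: left_normed.simps)
  next
    case 3
    then show ?thesis using w r
      by (intro exI[of _ "\<lambda>w. if w = r then 1 else 0"])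
        (simp add: yx_combination_single nscale_def del: left_normed.simps)
  qed
next
  case (add p q)
  then obtain c d where "p = yx_combination n c" "q = yx_combination n d" by blast
  then show ?case
    by (intro exI[of _ "\<lambda>w. c w + d w"]) (simp add: yx_combination_def nadd_def algebra_simps sum.distrib)
next
  case (scale p k)
  then obtain c where "p = yx_combination n c" by blast
  then show ?case
    by (intro exI[of _ "\<lambda>w. k * c w"]) (simp add: yx_combination_def nscale_def algebra_simps sum_distrib_left)
qed

lemma homogeneous_nmult:
  assumes "homogeneous m p" "homogeneous n q"
  shows "homogeneous (m + n) (nmult p q)"
  unfolding homogeneous_def
proof (intro allI impI)
  fix w assume "nmult p q w \<noteq> 0"
  then obtain i where i: "i \<le> length w" "p (take i w) * q (drop i w) \<noteq> 0"
    unfolding nmult_def by (metis (no_types, lifting) atMost_iff sum.neutral)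
  then have "length (take i w) = m" "length (drop i w) = n"
    using assms unfolding homogeneous_def by (metis mult_zero_left, metis mult_zero_right)
  then show "length w = m + n" using i(1) by simp
qed

lemma homogeneous_brk: "homogeneous m p \<Longrightarrow> homogeneous n q \<Longrightarrow> homogeneous (m + n) (brk p q)"
  using homogeneous_nmult[of m p n q] homogeneous_nmult[of n q m p] unfolding homogeneous_def brk_def
  by (metis add.commute diff_zero)

lemma homogeneous_nadd: "homogeneous n p \<Longrightarrow> homogeneous n q \<Longrightarrow> homogeneous n (nadd p q)"
  unfolding homogeneous_def nadd_def by (metis add.left_neutral)

lemma homogeneous_nscale: "homogeneous n p \<Longrightarrow> homogeneous n (nscale c p)"
  unfolding homogeneous_def nscale_def by (metis mult_zero_right)

lemma homogeneous_left_normed: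
  assumes "length w = n"
  shows "homogeneous n (left_normed w :: 'a::comm_ring_1 npoly)"
  unfolding assms[symmetric]
proof (induction w rule: rev_induct)
  case Nil
  then show ?case by (simp add: homogeneous_def)
next
  case (snoc b w)
  have b: "homogeneous 1 (gen_poly b :: 'a npoly)"
    by (simp add: homogeneous_def gen_poly_def)
  show ?case
  proof (cases "w = []")
    case True
    then show ?thesis using b by simp
  next
    case False
    then show ?thesis using homogeneous_brk[OF snoc b] by (simp add: left_normed_snoc)
  qed
qed

lemma homogeneous_eqI:
  assumes "homogeneous n p" "homogeneous n q" "\<forall>v\<in>set (List.n_lists n [Gx, Gy]). p v = q v"
  shows "p = q"
proof
  fix v
  show "p v = q v"
  proof (cases "length v = n")
    case True
    then show ?thesis using assms(3) words_length_eq_set_n_lists by blast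
  next
    case False
    then show ?thesis using assms(1,2) unfolding homogeneous_def by metis
  qed
qed

lemma homogeneous_yx_combination: "homogeneous (Suc (Suc n)) (yx_combination n c)"
  unfolding homogeneous_def
proof (intro allI impI)
  fix v assume "yx_combination n c v \<noteq> 0"
  then obtain w where "length w = n" "c w * left_normed (Gy # Gx # w) v \<noteq> 0"
    unfolding yx_combination_def by (metis (mono_tags, lifting) mem_Collect_eq sum.neutral)
  then show "length v = Suc (Suc n)"
    using homogeneous_left_normed[OF refl] unfolding homogeneous_def by (metis length_Cons mult_zero_right)
qed

lemma homogeneous_brk_left_normed:
  "length u + length w = n \<Longrightarrow> homogeneous n (brk (left_normed u) (left_normed w))"
  by (metis homogeneous_brk homogeneous_left_normed)

lemma nmult_gen_poly_right: "nmult p (gen_poly b) v = (if v \<noteq> [] \<and> last v = b then p (butlast v) else 0)"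
proof (induction v arbitrary: p)
  case Nil
  then show ?case by (simp add: nmult_Nil gen_poly_def)
next
  case (Cons a w)
  show ?case using Cons[of "\<lambda>u. p (a # u)"] by (cases w) (auto simp: nmult_Cons gen_poly_def)
qed

lemma nmult_gen_poly_left: "nmult (gen_poly b) p v = (if v \<noteq> [] \<and> hd v = b then p (tl v) else 0)"
proof (cases v)
  case Nil
  then show ?thesis by (simp add: nmult_Nil gen_poly_def)
next
  case (Cons a w)
  have "(\<lambda>u. gen_poly b (a # u)) = (\<lambda>u. if a = b \<and> u = [] then 1 else 0)"
    by (auto simp: gen_poly_def)
  then show ?thesis
    using Cons by (cases w) (simp_all add: nmult_Cons nmult_Nil nmult_zero_left gen_poly_def)
qed

lemma brk_gen_apply:
  "brk_gen p b v = (if v \<noteq> [] \<and> last v = b then p (butlast v) else 0)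
     - (if v \<noteq> [] \<and> hd v = b then p (tl v) else 0)"
  by (simp add: brk_gen_def brk_def nmult_gen_poly_left nmult_gen_poly_right)

lemma nmult_eq_sum_list: "nmult p q v = (\<Sum>i\<leftarrow>[0..<Suc (length v)]. p (take i v) * q (drop i v))"
  by (simp only: nmult_def interv_sum_list_conv_sum_set_nat set_upt atLeast0LessThan lessThan_Suc_atMost)

lemma lie_delta_eq_sum_list:
  "lie_delta p v = (\<Sum>i\<leftarrow>[0..<length v]. if v ! i = Gx then p (v[i := Gy]) else 0)"
proof -
  have "{i. i < length v \<and> v ! i = Gx} = {i \<in> {..<length v}. v ! i = Gx}" by auto
  then show ?thesis
    by (simp only: lie_delta_def sum.inter_filter[OF finite_lessThan]
        interv_sum_list_conv_sum_set_nat set_upt atLeast0LessThan)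
qed

section \<open>Degree six\<close>

lemma yx_combination_4_apply:
  "yx_combination 4 c v =
      c [Gx,Gx,Gx,Gx] * left_normed [Gy,Gx,Gx,Gx,Gx,Gx] v + c [Gy,Gx,Gx,Gx] * left_normed [Gy,Gx,Gy,Gx,Gx,Gx] v
    + c [Gx,Gy,Gx,Gx] * left_normed [Gy,Gx,Gx,Gy,Gx,Gx] v + c [Gy,Gy,Gx,Gx] * left_normed [Gy,Gx,Gy,Gy,Gx,Gx] v
    + c [Gx,Gx,Gy,Gx] * left_normed [Gy,Gx,Gx,Gx,Gy,Gx] v + c [Gy,Gx,Gy,Gx] * left_normed [Gy,Gx,Gy,Gx,Gy,Gx] v
    + c [Gx,Gy,Gy,Gx] * left_normed [Gy,Gx,Gx,Gy,Gy,Gx] v + c [Gy,Gy,Gy,Gx] * left_normed [Gy,Gx,Gy,Gy,Gy,Gx] v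
    + c [Gx,Gx,Gx,Gy] * left_normed [Gy,Gx,Gx,Gx,Gx,Gy] v + c [Gy,Gx,Gx,Gy] * left_normed [Gy,Gx,Gy,Gx,Gx,Gy] v
    + c [Gx,Gy,Gx,Gy] * left_normed [Gy,Gx,Gx,Gy,Gx,Gy] v + c [Gy,Gy,Gx,Gy] * left_normed [Gy,Gx,Gy,Gy,Gx,Gy] v
    + c [Gx,Gx,Gy,Gy] * left_normed [Gy,Gx,Gx,Gx,Gy,Gy] v + c [Gy,Gx,Gy,Gy] * left_normed [Gy,Gx,Gy,Gx,Gy,Gy] v
    + c [Gx,Gy,Gy,Gy] * left_normed [Gy,Gx,Gx,Gy,Gy,Gy] v + c [Gy,Gy,Gy,Gy] * left_normed [Gy,Gx,Gy,Gy,Gy,Gy] v"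
  unfolding yx_combination_def words_length_eq_set_n_lists
  by (simp add: numeral_eq_Suc add.assoc del: left_normed.simps)

lemma yx_combination_4_delta_relations:
  fixes c :: "gen list \<Rightarrow> 'a::field_char_0"
  assumes "lie_delta (yx_combination 4 c) = (\<lambda>_. 0)"
  shows "c [Gx,Gx,Gx,Gy] + c [Gx,Gx,Gy,Gx] + c [Gx,Gy,Gx,Gx] + c [Gy,Gx,Gx,Gx] = 0"
    and "-2 * (c [Gx,Gx,Gy,Gy] + c [Gx,Gy,Gx,Gy] + c [Gx,Gy,Gy,Gx] + c [Gy,Gx,Gx,Gy] + c [Gy,Gx,Gy,Gx]
        + c [Gy,Gy,Gx,Gx]) = 0"
    and "c [Gx,Gx,Gy,Gy] + 2 * c [Gx,Gy,Gx,Gy] + 3 * c [Gx,Gy,Gy,Gx] + 2 * c [Gy,Gx,Gx,Gy]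
        + 3 * c [Gy,Gx,Gy,Gx] + 4 * c [Gy,Gy,Gx,Gx] = 0"
    and "-3 * (c [Gx,Gy,Gy,Gy] + c [Gy,Gx,Gy,Gy] + c [Gy,Gy,Gx,Gy] + c [Gy,Gy,Gy,Gx]) = 0"
    and "c [Gx,Gy,Gy,Gy] + c [Gy,Gx,Gy,Gy] - c [Gy,Gy,Gx,Gy] - 3 * c [Gy,Gy,Gy,Gx] = 0"
    and "-4 * c [Gy,Gy,Gy,Gy] = 0"
  using assms[THEN fun_cong, of "[Gy,Gx,Gx,Gx,Gx,Gx]"] assms[THEN fun_cong, of "[Gy,Gy,Gx,Gx,Gx,Gx]"]
    assms[THEN fun_cong, of "[Gx,Gy,Gy,Gx,Gx,Gx]"] assms[THEN fun_cong, of "[Gx,Gx,Gx,Gy,Gy,Gy]"]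
    assms[THEN fun_cong, of "[Gx,Gx,Gy,Gy,Gx,Gy]"] assms[THEN fun_cong, of "[Gy,Gy,Gy,Gy,Gx,Gx]"]
  by (simp_all (no_asm_use) add: lie_delta_eq_sum_list yx_combination_4_apply brk_gen_apply
      gen_poly_def algebra_simps)

lemma eq_if_diff_eq_lincomb:
  fixes x y :: "'a::comm_ring_1"
  assumes "x - y = a * r + b * s" "r = 0" "s = 0"
  shows "x = y"
  using assms by simp

lemma yx_combination_4_delta_kernel:
  fixes c :: "gen list \<Rightarrow> 'a::field_char_0"
  assumes "lie_delta (yx_combination 4 c) = (\<lambda>_. 0)"
  shows "\<exists>\<alpha> \<beta> \<gamma>. yx_combination 4 c =
    nadd (nscale \<alpha> (left_normed [Gy,Gx,Gx,Gx,Gx,Gx]))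
      (nadd (nscale \<beta> (brk (left_normed [Gy,Gx,Gx,Gx]) (left_normed [Gy,Gx])))
        (nscale \<gamma> (brk (left_normed [Gy,Gx,Gy]) (left_normed [Gy,Gx,Gx]))))"
    (is "\<exists>\<alpha> \<beta> \<gamma>. _ = ?T \<alpha> \<beta> \<gamma>")
proof (intro exI)
  note rel = yx_combination_4_delta_relations[OF assms]
  have yxxx: "c [Gy,Gx,Gx,Gx] = - (c [Gx,Gx,Gx,Gy] + c [Gx,Gx,Gy,Gx] + c [Gx,Gy,Gx,Gx])"
    using rel(1) unfolding eq_neg_iff_add_eq_0 by (simp add: add_ac)
  have xxyy: "c [Gx,Gx,Gy,Gy] = c [Gx,Gy,Gy,Gx] + c [Gy,Gx,Gy,Gx] + 2 * c [Gy,Gy,Gx,Gx]"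
    by (rule eq_if_diff_eq_lincomb[where a="-1" and b="-1", OF _ rel(2,3)]) (simp add: algebra_simps)
  have xyxy: "c [Gx,Gy,Gx,Gy] =
      - (2 * c [Gx,Gy,Gy,Gx] + c [Gy,Gx,Gx,Gy] + 2 * c [Gy,Gx,Gy,Gx] + 3 * c [Gy,Gy,Gx,Gx])"
    by (rule eq_if_diff_eq_lincomb[where a="1/2" and b="1", OF _ rel(2,3)]) (simp add: algebra_simps)
  have yyxy: "c [Gy,Gy,Gx,Gy] = - 2 * c [Gy,Gy,Gy,Gx]"
    by (rule eq_if_diff_eq_lincomb[where a="-1/6" and b="-1/2", OF _ rel(4,5)]) (simp add: algebra_simps)
  have xyyy: "c [Gx,Gy,Gy,Gy] = c [Gy,Gy,Gy,Gx] - c [Gy,Gx,Gy,Gy]"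
    by (rule eq_if_diff_eq_lincomb[where a="-1/6" and b="1/2", OF _ rel(4,5)]) (simp add: algebra_simps)
  have yyyy: "c [Gy,Gy,Gy,Gy] = 0"
    using rel(6) by simp
  let ?\<alpha> = "c [Gx,Gx,Gx,Gx]"
  let ?\<beta> = "- (2 * c [Gx,Gx,Gx,Gy] + c [Gx,Gx,Gy,Gx])"
  let ?\<gamma> = "c [Gx,Gy,Gy,Gx] + c [Gy,Gx,Gy,Gx] + 3 * c [Gy,Gy,Gx,Gx]"
  have "homogeneous 6 (?T ?\<alpha> ?\<beta> ?\<gamma>)"
    by (intro homogeneous_nadd homogeneous_nscale homogeneous_left_normed
        homogeneous_brk_left_normed) simp_all
  moreover have "\<forall>v\<in>set (List.n_lists 6 [Gx, Gy]). yx_combination 4 c v = ?T ?\<alpha> ?\<beta> ?\<gamma> v"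
    unfolding yx_combination_4_apply
    by (simp add: numeral_eq_Suc nadd_def nscale_def brk_def nmult_eq_sum_list brk_gen_apply
        gen_poly_def yxxx xxyy xyxy yyxy xyyy yyyy algebra_simps)
  ultimately show "yx_combination 4 c = ?T ?\<alpha> ?\<beta> ?\<gamma>"
    using homogeneous_yx_combination[of 4 c] homogeneous_eqI by simp
qed

theorem proposition5p4:
  fixes f :: "'a::field_char_0 npoly"
  assumes "f \<in> free_lie"
    and "lie_delta f = (\<lambda>_. 0)"
    and "homogeneous 6 f"
  shows "f \<in> lie_gen {genX, brk genY genX,
           brk (brk (brk genY genX) genY) (brk (brk genY genX) genX)}"
    (is "_ \<in> lie_gen ?S")
proof -
  let ?A = "left_normed [Gy,Gx,Gx,Gx,Gx,Gx] :: 'a npoly"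
  let ?B = "brk (left_normed [Gy,Gx,Gx,Gx]) (left_normed [Gy,Gx]) :: 'a npoly"
  let ?C = "brk (left_normed [Gy,Gx,Gy]) (left_normed [Gy,Gx,Gx]) :: 'a npoly"
  have "f \<in> left_normed_span (Suc (Suc 4))"
    using free_lie_homogeneous_in_left_normed_span assms(1,3) by simp
  then obtain c where "f = yx_combination 4 c"
    using left_normed_span_Suc_Suc_yx_combination by blast
  then obtain \<alpha> \<beta> \<gamma> where f: "f = nadd (nscale \<alpha> ?A) (nadd (nscale \<beta> ?B) (nscale \<gamma> ?C))"
    using yx_combination_4_delta_kernel assms(2) by blast
  have x: "genX \<in> lie_gen ?S" and yx: "brk genY genX \<in> lie_gen ?S"
    by (simp_all add: lie_gen.gen)
  have "?A \<in> lie_gen ?S" "?B \<in> lie_gen ?S"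
    by (simp_all add: brk_gen_def gen_poly_simps) (intro lie_gen.bracket x yx)+
  moreover have "?C \<in> lie_gen ?S"
    by (simp add: brk_gen_def gen_poly_simps lie_gen.gen)
  ultimately show ?thesis
    unfolding f by (intro lie_gen.add lie_gen.scale)
qed

end
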